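(* Let $K$ be a finite simplicial complex and $\gamma=[c]\in H_1(K;\mathbb{R})$. If $C\subseteq K^{(1)}$ is an inclusion-minimal homological edge cut for $\gamma$ (i.e. $C$ is a homological edge cut for $\gamma$ but $C\setminus\{e\}$ is not, for every $e\in C$), then there exists a cocycle $\varphi\in C^1(K;\mathbb{R})$ (i.e. $\partial^*\varphi=0$) with $\mathrm{Supp}(\varphi)=C$ and $\varphi(c)=1$.
   Context: For $A\subseteq K$, $K-A$ is the largest subcomplex of $K$ containing no simplex of $A$. $C\subseteq K^{(1)}$ (edges of $K$) is a homological edge cut for $\gamma\in H_1(K;\mathbb{R})$ if $\gamma\notin\mathrm{Im}(H_1(K-C;\mathbb{R})\to H_1(K;\mathbb{R}))$, the map induced by inclusion. $C^1(K;\mathbb{R})=\mathrm{Hom}(C_1(K;\mathbb{R}),\mathbb{R})$ with coboundary $(\partial^*\varphi)(\sigma)=\varphi(\partial\sigma)$ for $2$-simplices $\sigma$ (with a fixed orientation of simplices). $\mathrm{Supp}(\varphi)$ is the set of edges $e$ with $\varphi(e)\ne0$. *)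

theory Defs
  imports Complex_Main
begin

text \<open>Finite abstract simplicial complexes on a linearly ordered vertex type.
  Simplices are finite nonempty vertex sets; each simplex is oriented by the
  increasing order of its vertices.\<close>

definition simplicial_complex :: "'v set set \<Rightarrow> bool" where
  "simplicial_complex K \<longleftrightarrow> finite K \<and>
     (\<forall>\<sigma>\<in>K. finite \<sigma> \<and> \<sigma> \<noteq> {}) \<and>
     (\<forall>\<sigma>\<in>K. \<forall>\<tau>. \<tau> \<subseteq> \<sigma> \<and> \<tau> \<noteq> {} \<longrightarrow> \<tau> \<in> K)"

definition simplices :: "'v set set \<Rightarrow> nat \<Rightarrow> 'v set set" where
  "simplices K k = {\<sigma>\<in>K. card \<sigma> = Suc k}"

abbreviation edges :: "'v set set \<Rightarrow> 'v set set" where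
  "edges K \<equiv> simplices K 1"

text \<open>K - A: the largest subcomplex of K containing no simplex of A.\<close>
definition complex_minus :: "'v set set \<Rightarrow> 'v set set \<Rightarrow> 'v set set" where
  "complex_minus K A = {\<sigma>\<in>K. \<forall>\<alpha>\<in>A. \<not> \<alpha> \<subseteq> \<sigma>}"

text \<open>Incidence number [\<sigma> : \<tau>] for the ordered orientation: if \<tau> is the face of
  \<sigma> obtained by deleting its i-th vertex (counting from 0 in increasing order),
  it is (-1)^i; otherwise 0.\<close>
definition incidence :: "'v::linorder set \<Rightarrow> 'v set \<Rightarrow> real" where
  "incidence \<sigma> \<tau> = (if \<tau> \<subseteq> \<sigma> \<and> card \<tau> + 1 = card \<sigma>
      then (-1) ^ card {w\<in>\<sigma>. w < the_elem (\<sigma> - \<tau>)} else 0)"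

definition is_chain :: "'v set set \<Rightarrow> nat \<Rightarrow> ('v set \<Rightarrow> real) \<Rightarrow> bool" where
  "is_chain K k c \<longleftrightarrow> (\<forall>\<sigma>. c \<sigma> \<noteq> 0 \<longrightarrow> \<sigma> \<in> simplices K k)"

definition chain_boundary :: "'v::linorder set set \<Rightarrow> nat \<Rightarrow> ('v set \<Rightarrow> real) \<Rightarrow> ('v set \<Rightarrow> real)" where
  "chain_boundary K k c = (\<lambda>\<tau>. \<Sum>\<sigma>\<in>simplices K k. c \<sigma> * incidence \<sigma> \<tau>)"

definition is_cycle :: "'v::linorder set set \<Rightarrow> nat \<Rightarrow> ('v set \<Rightarrow> real) \<Rightarrow> bool" where
  "is_cycle K k c \<longleftrightarrow> is_chain K k c \<and> (\<forall>\<tau>. chain_boundary K k c \<tau> = 0)"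

definition is_boundary :: "'v::linorder set set \<Rightarrow> nat \<Rightarrow> ('v set \<Rightarrow> real) \<Rightarrow> bool" where
  "is_boundary K k b \<longleftrightarrow> (\<exists>d. is_chain K (Suc k) d \<and> b = chain_boundary K (Suc k) d)"

text \<open>C is a homological edge cut for the class [c] \<in> H_1(K;R): [c] is not in the image of
  H_1(K - C;R) \<rightarrow> H_1(K;R), i.e. there is no 1-cycle z of K - C homologous to c in K.\<close>
definition homological_edge_cut ::
  "'v::linorder set set \<Rightarrow> ('v set \<Rightarrow> real) \<Rightarrow> 'v set set \<Rightarrow> bool" where
  "homological_edge_cut K c C \<longleftrightarrow> C \<subseteq> edges K \<and>
     \<not> (\<exists>z. is_cycle (complex_minus K C) 1 z \<and> is_boundary K 1 (\<lambda>e. c e - z e))"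

definition cochain_eval :: "'v set set \<Rightarrow> ('v set \<Rightarrow> real) \<Rightarrow> ('v set \<Rightarrow> real) \<Rightarrow> real" where
  "cochain_eval K \<phi> c = (\<Sum>e\<in>edges K. \<phi> e * c e)"

definition is_cocycle1 :: "'v::linorder set set \<Rightarrow> ('v set \<Rightarrow> real) \<Rightarrow> bool" where
  "is_cocycle1 K \<phi> \<longleftrightarrow> (\<forall>\<sigma>\<in>simplices K 2. (\<Sum>e\<in>edges K. \<phi> e * incidence \<sigma> e) = 0)"

definition supp1 :: "'v set set \<Rightarrow> ('v set \<Rightarrow> real) \<Rightarrow> 'v set set" where
  "supp1 K \<phi> = {e\<in>edges K. \<phi> e \<noteq> 0}"

end

theory Submission
  imports Defs "HOL-Library.Function_Algebras" "HOL-Library.Indicator_Function"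
begin

text \<open>Let \<open>R\<^sub>A = B\<^sub>1(K) + C\<^sub>1(K - A)\<close>, the 1-chains of \<open>K\<close> that become boundaries relative
  to \<open>K - A\<close>. Since \<open>\<partial>\<partial> = 0\<close>, \<open>A\<close> is a homological edge cut for \<open>[c]\<close> exactly when
  \<open>c \<notin> R\<^sub>A\<close>. If \<open>C\<close> is a minimal cut and \<open>e \<in> C\<close>, then \<open>c \<in> R\<^bsub>C-{e}\<^esub> \<subseteq> R\<^sub>C + \<real>e\<close>,
  so \<open>e \<notin> R\<^sub>C\<close>. A real vector space is not a finite union of proper subspaces, so some linear
  functional \<open>h\<close> vanishes on \<open>R\<^sub>C\<close> but on none of \<open>c\<close> and the edges of \<open>C\<close>. The cochain
  \<open>\<phi>(e) = h(e)/h(c)\<close> is then a cocycle (\<open>h\<close> kills boundaries) with support \<open>C\<close>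
  (\<open>h\<close> kills the edges of \<open>K - C\<close>) and \<open>\<phi>(c) = 1\<close>.\<close>

instantiation "fun" :: (type, real_vector) real_vector
begin
definition scaleR_fun :: "real \<Rightarrow> ('a \<Rightarrow> 'b) \<Rightarrow> 'a \<Rightarrow> 'b" where
  "scaleR_fun r f = (\<lambda>x. r *\<^sub>R f x)"
instance by standard (auto simp: scaleR_fun_def algebra_simps)
end

lemma scaleR_fun_apply [simp]: "(r *\<^sub>R f) x = r *\<^sub>R f x"
  by (simp add: scaleR_fun_def)

lemma sum_fun_apply: "(\<Sum>i\<in>A. f i) x = (\<Sum>i\<in>A. f i x)"
  by (induct A rule: infinite_finite_induct) auto

lemma linear_functional_separating:
  fixes U :: "'a::real_vector set"
  assumes "subspace U" "v \<notin> U"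
  shows "\<exists>g::'a \<Rightarrow> real. linear g \<and> (\<forall>x\<in>U. g x = 0) \<and> g v = 1"
proof -
  obtain B where B: "B \<subseteq> U" "independent B" "U \<subseteq> span B"
    using maximal_independent_subset by blast
  have "span B \<subseteq> U"
    using B assms(1) by (metis span_minimal)
  then have v_span: "v \<notin> span B"
    using assms(2) by auto
  then have "independent (insert v B)"
    using B independent_insertI by blast
  from linear_independent_extend[OF this, of "\<lambda>x. if x = v then 1 else 0"]
  obtain g :: "'a \<Rightarrow> real"
    where g: "linear g" "\<forall>x\<in>insert v B. g x = (if x = v then 1 else 0)"
    by blast
  have "v \<notin> B"
    using v_span span_base by blast
  then have "\<forall>x\<in>B. g x = 0"
    using g(2) by auto
  then have "\<forall>x\<in>span B. g x = 0"
    using linear_eq_0_on_span[OF g(1)] by blast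
  then show ?thesis
    using g B by auto
qed

lemma linear_functional_avoiding:
  fixes U :: "'a::real_vector set"
  assumes "subspace U" "finite X" "X \<inter> U = {}"
  shows "\<exists>h::'a \<Rightarrow> real. linear h \<and> (\<forall>u\<in>U. h u = 0) \<and> (\<forall>x\<in>X. h x \<noteq> 0)"
  using assms(2,3)
proof (induction X rule: finite_induct)
  case empty
  show ?case
    using linear_zero by force
next
  case (insert v X)
  then obtain h :: "'a \<Rightarrow> real" where h: "linear h" "\<forall>u\<in>U. h u = 0" "\<forall>x\<in>X. h x \<noteq> 0"
    by blast
  have "v \<notin> U"
    using insert.prems by blast
  then obtain g :: "'a \<Rightarrow> real" where g: "linear g" "\<forall>u\<in>U. g u = 0" "g v = 1"
    using linear_functional_separating[OF assms(1)] by blast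
  have "finite ((\<lambda>x. - h x / g x) ` insert v X)"
    using insert.hyps(1) by simp
  then obtain t :: real where t: "t \<notin> (\<lambda>x. - h x / g x) ` insert v X"
    using ex_new_if_finite[OF infinite_UNIV_char_0] by blast
  have "h x + t * g x \<noteq> 0" if "x \<in> insert v X" for x
  proof (cases "g x = 0")
    case True
    then show ?thesis
      using that h(3) g(3) by auto
  next
    case False
    have "t \<noteq> - h x / g x"
      using that t by blast
    then show ?thesis
      using False by (auto simp: field_simps)
  qed
  moreover have "linear (\<lambda>x. h x + t * g x)"
    using linear_compose_add[OF h(1) linear_compose_scale_right[OF g(1), of t]] by simp
  ultimately show ?case
    using h(2) g(2) by (intro exI[of _ "\<lambda>x. h x + t * g x"]) auto
qed

lemma linear_eq_sum_indicator:
  fixes h :: "('a \<Rightarrow> real) \<Rightarrow> real"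
  assumes "linear h" "finite E" "\<forall>\<sigma>. x \<sigma> \<noteq> 0 \<longrightarrow> \<sigma> \<in> E"
  shows "h x = (\<Sum>e\<in>E. x e * h (indicator {e}))"
proof -
  have "x = (\<Sum>e\<in>E. x e *\<^sub>R indicator {e})"
  proof
    fix \<tau>
    have "(\<Sum>e\<in>E. x e *\<^sub>R (indicator {e} :: 'a \<Rightarrow> real)) \<tau> = (\<Sum>e\<in>E. if e = \<tau> then x \<tau> else 0)"
      by (auto simp: sum_fun_apply indicator_def intro: sum.cong)
    also have "\<dots> = x \<tau>"
      using assms(2,3) by auto
    finally show "x \<tau> = (\<Sum>e\<in>E. x e *\<^sub>R indicator {e}) \<tau>" by simp
  qed
  then have "h x = h (\<Sum>e\<in>E. x e *\<^sub>R indicator {e})"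
    by simp
  also have "\<dots> = (\<Sum>e\<in>E. x e * h (indicator {e}))"
    using assms(1) by (simp add: linear_sum linear_scale)
  finally show ?thesis .
qed

lemma incidence_nonzeroD:
  "incidence \<sigma> \<tau> \<noteq> 0 \<Longrightarrow> \<tau> \<subseteq> \<sigma> \<and> card \<tau> + 1 = card \<sigma>"
  by (auto simp: incidence_def split: if_splits)

lemma incidence_eqI:
  "\<tau> \<subseteq> \<sigma> \<Longrightarrow> card \<tau> + 1 = card \<sigma> \<Longrightarrow> \<sigma> - \<tau> = {v} \<Longrightarrow> card {w\<in>\<sigma>. w < v} = n \<Longrightarrow>
    incidence \<sigma> \<tau> = (-1) ^ n"
  by (simp add: incidence_def)

lemma card_3_ordered:
  fixes \<sigma> :: "'v::linorder set"
  assumes "card \<sigma> = 3"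
  obtains a b c where "a < b" "b < c" "\<sigma> = {a, b, c}"
proof -
  have "finite \<sigma>"
    using assms card.infinite by fastforce
  define xs where "xs = sorted_list_of_set \<sigma>"
  have "length xs = 3" "sorted_wrt (<) xs" "set xs = \<sigma>"
    using assms \<open>finite \<sigma>\<close> by (simp_all add: xs_def)
  then obtain a b c where "xs = [a, b, c]"
    by (metis (no_types) length_0_conv length_Suc_conv numeral_3_eq_3)
  then show ?thesis
    using that \<open>sorted_wrt (<) xs\<close> \<open>set xs = \<sigma>\<close> by auto
qed

lemma incidence_edge:
  fixes x y :: "'v::linorder"
  assumes "x < y"
  shows "incidence {x, y} \<tau> = (if \<tau> = {y} then 1 else if \<tau> = {x} then -1 else 0)"
proof -
  have card_xy: "card {x, y} = 2"
    using assms by simp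
  have "incidence {x, y} {y} = (-1) ^ 0"
    using assms card_xy by (intro incidence_eqI[where v = x]) auto
  moreover have "{w\<in>{x, y}. w < y} = {x}"
    using assms by auto
  then have "incidence {x, y} {x} = (-1) ^ 1"
    using assms card_xy by (intro incidence_eqI[where v = y]) auto
  moreover have "incidence {x, y} \<tau> = 0" if "\<tau> \<noteq> {y}" "\<tau> \<noteq> {x}"
  proof (rule ccontr)
    assume "incidence {x, y} \<tau> \<noteq> 0"
    then have "\<tau> \<subseteq> {x, y}" "card \<tau> = 1"
      using incidence_nonzeroD card_xy by fastforce+
    then show False
      using that by (auto simp: card_1_singleton_iff)
  qed
  ultimately show ?thesis
    using assms by auto
qed

lemma incidence_triangle:
  fixes a b c :: "'v::linorder"
  assumes "a < b" "b < c"
  shows "incidence {a, b, c} {a, b} = 1" "incidence {a, b, c} {a, c} = -1"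
    "incidence {a, b, c} {b, c} = 1"
proof -
  have card_abc: "card {a, b, c} = 3"
    using assms by (auto simp: card_insert_if)
  have "{w\<in>{a, b, c}. w < c} = {a, b}"
    using assms by auto
  then have "incidence {a, b, c} {a, b} = (-1) ^ 2"
    using assms card_abc by (intro incidence_eqI[where v = c]) auto
  then show "incidence {a, b, c} {a, b} = 1"
    by simp
  have "{w\<in>{a, b, c}. w < b} = {a}"
    using assms by auto
  then have "incidence {a, b, c} {a, c} = (-1) ^ 1"
    using assms card_abc by (intro incidence_eqI[where v = b]) auto
  then show "incidence {a, b, c} {a, c} = -1"
    by simp
  have "{w\<in>{a, b, c}. w < a} = {}"
    using assms by auto
  then have "incidence {a, b, c} {b, c} = (-1) ^ 0"
    using assms card_abc by (intro incidence_eqI[where v = a]) auto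
  then show "incidence {a, b, c} {b, c} = 1"
    by simp
qed

lemma face_in_complex:
  assumes "simplicial_complex K" "\<sigma> \<in> K" "\<tau> \<subseteq> \<sigma>" "\<tau> \<noteq> {}"
  shows "\<tau> \<in> K"
  using assms unfolding simplicial_complex_def by blast

lemma finite_simplices: "simplicial_complex K \<Longrightarrow> finite (simplices K k)"
  by (simp add: simplicial_complex_def simplices_def)

lemma boundary_boundary_simplex:
  fixes K :: "'v::linorder set set"
  assumes K: "simplicial_complex K" and \<sigma>: "\<sigma> \<in> simplices K 2"
  shows "(\<Sum>e\<in>edges K. incidence \<sigma> e * incidence e \<tau>) = 0"
proof -
  have "card \<sigma> = 3" "\<sigma> \<in> K"
    using \<sigma> by (simp_all add: simplices_def)
  then obtain a b c where abc: "a < b" "b < c" and \<sigma>_eq: "\<sigma> = {a, b, c}"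
    using card_3_ordered by blast
  then have distinct: "a \<noteq> b" "a \<noteq> c" "b \<noteq> c"
    by auto
  let ?F = "{{a, b}, {a, c}, {b, c}}"
  have "?F \<subseteq> edges K"
    using face_in_complex[OF K \<open>\<sigma> \<in> K\<close>] abc \<sigma>_eq by (auto simp: simplices_def)
  moreover have "incidence \<sigma> e = 0" if "e \<notin> ?F" for e
  proof (rule ccontr)
    assume "incidence \<sigma> e \<noteq> 0"
    then have "e \<subseteq> {a, b, c}" "card e = 2"
      using incidence_nonzeroD \<open>card \<sigma> = 3\<close> \<sigma>_eq by fastforce+
    moreover obtain x y where "e = {x, y}" "x \<noteq> y"
      using \<open>card e = 2\<close> by (auto simp: card_2_iff)
    ultimately show False
      using that by (auto simp: doubleton_eq_iff)
  qed
  ultimately have "(\<Sum>e\<in>edges K. incidence \<sigma> e * incidence e \<tau>) =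
      (\<Sum>e\<in>?F. incidence \<sigma> e * incidence e \<tau>)"
    by (intro sum.mono_neutral_right finite_simplices[OF K]) auto
  also have "\<dots> = incidence {a, b} \<tau> - incidence {a, c} \<tau> + incidence {b, c} \<tau>"
  proof -
    have "{a, b} \<noteq> {a, c}" "{a, b} \<noteq> {b, c}" "{a, c} \<noteq> {b, c}"
      using distinct by (auto simp: doubleton_eq_iff)
    then show ?thesis
      using incidence_triangle[OF abc] by (simp add: \<sigma>_eq)
  qed
  also have "\<dots> = 0"
    using abc distinct by (simp add: incidence_edge)
  finally show ?thesis .
qed

lemma chain_boundary_boundary:
  fixes K :: "'v::linorder set set"
  assumes "simplicial_complex K"
  shows "chain_boundary K 1 (chain_boundary K 2 d) \<tau> = 0"
proof -
  have "chain_boundary K 1 (chain_boundary K 2 d) \<tau> =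
      (\<Sum>e\<in>edges K. \<Sum>\<sigma>\<in>simplices K 2. d \<sigma> * (incidence \<sigma> e * incidence e \<tau>))"
    by (simp add: chain_boundary_def sum_distrib_right mult.assoc)
  also have "\<dots> = (\<Sum>\<sigma>\<in>simplices K 2. d \<sigma> * (\<Sum>e\<in>edges K. incidence \<sigma> e * incidence e \<tau>))"
    by (subst sum.swap) (simp add: sum_distrib_left)
  also have "\<dots> = 0"
    using boundary_boundary_simplex[OF assms] by simp
  finally show ?thesis .
qed

lemma is_chain_chain_boundary:
  assumes "simplicial_complex K"
  shows "is_chain K k (chain_boundary K (Suc k) d)"
  unfolding is_chain_def
proof (intro allI impI)
  fix \<tau> assume "chain_boundary K (Suc k) d \<tau> \<noteq> 0"
  then obtain \<sigma> where \<sigma>: "\<sigma> \<in> simplices K (Suc k)" "incidence \<sigma> \<tau> \<noteq> 0"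
    unfolding chain_boundary_def by (metis (no_types, lifting) mult_zero_right sum.neutral)
  then have "\<tau> \<subseteq> \<sigma>" "card \<tau> = Suc k" "\<sigma> \<in> K"
    using incidence_nonzeroD by (fastforce simp: simplices_def)+
  moreover have "\<tau> \<noteq> {}"
    using \<open>card \<tau> = Suc k\<close> by auto
  ultimately show "\<tau> \<in> simplices K k"
    using face_in_complex[OF assms] by (auto simp: simplices_def)
qed

lemma chain_boundary_indicator:
  assumes "finite (simplices K k)" "\<sigma> \<in> simplices K k"
  shows "chain_boundary K k (indicator {\<sigma>}) = incidence \<sigma>"
  using assms by (simp add: chain_boundary_def indicator_def)

lemma linear_chain_boundary: "linear (chain_boundary K k)"
  by (rule linearI) (auto simp: chain_boundary_def sum.distrib sum_distrib_left algebra_simps)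

lemma subspace_chains: "subspace {z. is_chain K k z}"
  unfolding subspace_def is_chain_def by (auto simp: plus_fun_def) (metis add.right_neutral)

lemma subspace_boundaries: "subspace {b. is_boundary K k b}"
proof -
  have "{b. is_boundary K k b} = chain_boundary K (Suc k) ` {d. is_chain K (Suc k) d}"
    by (auto simp: is_boundary_def)
  then show ?thesis
    using linear_subspace_image[OF linear_chain_boundary subspace_chains] by metis
qed

lemma edges_complex_minus:
  assumes "A \<subseteq> edges K"
  shows "simplices (complex_minus K A) 1 = edges K - A"
proof -
  have "\<alpha> = \<sigma>" if "\<alpha> \<in> edges K" "\<sigma> \<in> edges K" "\<alpha> \<subseteq> \<sigma>" for \<alpha> \<sigma>
    using that card_subset_eq[of \<sigma> \<alpha>] card.infinite[of \<sigma>] by (auto simp: simplices_def)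
  then show ?thesis
    using assms by (auto simp: simplices_def complex_minus_def)
qed

definition relative_boundaries :: "'v::linorder set set \<Rightarrow> 'v set set \<Rightarrow> ('v set \<Rightarrow> real) set" where
  "relative_boundaries K A =
     {b + z | b z. is_boundary K 1 b \<and> is_chain (complex_minus K A) 1 z}"

lemma subspace_relative_boundaries: "subspace (relative_boundaries K A)"
  unfolding relative_boundaries_def
  using subspace_sums[OF subspace_boundaries subspace_chains] by simp

lemma boundary_in_relative_boundaries:
  "is_boundary K 1 b \<Longrightarrow> b \<in> relative_boundaries K A"
  unfolding relative_boundaries_def
  by (intro CollectI exI[of _ b] exI[of _ 0]) (auto simp: is_chain_def)

lemma chain_in_relative_boundaries:
  "is_chain (complex_minus K A) 1 z \<Longrightarrow> z \<in> relative_boundaries K A"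
  unfolding relative_boundaries_def
  using subspace_0[OF subspace_boundaries] by (intro CollectI exI[of _ 0] exI[of _ z]) auto

lemma indicator_in_relative_boundaries:
  assumes "A \<subseteq> edges K" "e \<in> edges K - A"
  shows "indicator {e} \<in> relative_boundaries K A"
proof -
  have "is_chain (complex_minus K A) 1 (indicator {e})"
    unfolding is_chain_def edges_complex_minus[OF assms(1)] using assms(2) by (simp add: indicator_def)
  then show ?thesis
    by (rule chain_in_relative_boundaries)
qed

lemma homological_edge_cut_iff:
  fixes K :: "'v::linorder set set"
  assumes K: "simplicial_complex K" and c: "is_cycle K 1 c" and A: "A \<subseteq> edges K"
  shows "homological_edge_cut K c A \<longleftrightarrow> c \<notin> relative_boundaries K A"
proof
  assume "c \<notin> relative_boundaries K A"
  moreover have "c \<in> relative_boundaries K A"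
    if "is_cycle (complex_minus K A) 1 z" "is_boundary K 1 (\<lambda>e. c e - z e)" for z
    using that unfolding relative_boundaries_def is_cycle_def
    by (intro CollectI exI[of _ "\<lambda>e. c e - z e"] exI[of _ z]) auto
  ultimately show "homological_edge_cut K c A"
    using A by (auto simp: homological_edge_cut_def)
next
  assume cut: "homological_edge_cut K c A"
  show "c \<notin> relative_boundaries K A"
  proof
    assume "c \<in> relative_boundaries K A"
    then obtain b z where cbz: "c = b + z" and b: "is_boundary K 1 b"
      and z: "is_chain (complex_minus K A) 1 z"
      by (auto simp: relative_boundaries_def)
    obtain d where b_eq: "b = chain_boundary K 2 d"
      using b by (auto simp: is_boundary_def numeral_2_eq_2)
    have "chain_boundary (complex_minus K A) 1 z = chain_boundary K 1 z"
      unfolding chain_boundary_def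
      using z edges_complex_minus[OF A] finite_simplices[OF K]
      by (intro ext sum.mono_neutral_left) (auto simp: is_chain_def)
    also have "\<dots> = chain_boundary K 1 c - chain_boundary K 1 b"
      using cbz linear_diff[OF linear_chain_boundary] by (metis add_diff_cancel_left')
    also have "\<dots> = 0"
      using c chain_boundary_boundary[OF K] b_eq by (auto simp: is_cycle_def)
    finally have "is_cycle (complex_minus K A) 1 z"
      using z by (simp add: is_cycle_def)
    moreover have "(\<lambda>e. c e - z e) = b"
      using cbz by auto
    ultimately show False
      using cut b by (auto simp: homological_edge_cut_def)
  qed
qed

lemma indicator_notin_relative_boundaries:
  fixes K :: "'v::linorder set set"
  assumes K: "simplicial_complex K" and c: "is_cycle K 1 c" and A: "A \<subseteq> edges K"
    and cut: "homological_edge_cut K c A" and not_cut: "\<not> homological_edge_cut K c (A - {e})"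
  shows "indicator {e} \<notin> relative_boundaries K A"
proof
  assume e: "indicator {e} \<in> relative_boundaries K A"
  have "c \<in> relative_boundaries K (A - {e})"
    using homological_edge_cut_iff[OF K c] A not_cut by blast
  then obtain b z where cbz: "c = b + z" and b: "is_boundary K 1 b"
    and z: "is_chain (complex_minus K (A - {e})) 1 z"
    by (auto simp: relative_boundaries_def)
  have "is_chain (complex_minus K A) 1 (z - z e *\<^sub>R indicator {e})"
    using z A edges_complex_minus[of A K] edges_complex_minus[of "A - {e}" K]
    by (auto simp: is_chain_def indicator_def)
  then have "b + (z - z e *\<^sub>R indicator {e}) + z e *\<^sub>R indicator {e} \<in> relative_boundaries K A"
    using subspace_relative_boundaries e b
      boundary_in_relative_boundaries chain_in_relative_boundaries
    by (metis subspace_add subspace_scale)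
  then show False
    using cbz cut homological_edge_cut_iff[OF K c A] by simp
qed

lemma cochain_eval_linear_functional:
  assumes "linear h" "finite (edges K)" "is_chain K 1 x"
  shows "cochain_eval K (\<lambda>e. h (indicator {e})) x = h x"
  using linear_eq_sum_indicator[OF assms(1,2)] assms(3)
  by (simp add: cochain_eval_def is_chain_def mult.commute)

lemma is_cocycle1_linear_functional:
  fixes K :: "'v::linorder set set"
  assumes K: "simplicial_complex K" and h: "linear h"
    and h_boundary: "\<forall>b. is_boundary K 1 b \<longrightarrow> h b = 0"
  shows "is_cocycle1 K (\<lambda>e. h (indicator {e}))"
  unfolding is_cocycle1_def
proof
  fix \<sigma> assume \<sigma>: "\<sigma> \<in> simplices K 2"
  let ?b = "chain_boundary K 2 (indicator {\<sigma>})"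
  have "?b = incidence \<sigma>"
    using chain_boundary_indicator[OF finite_simplices[OF K] \<sigma>] .
  moreover have "is_boundary K 1 ?b"
    using \<sigma> unfolding is_boundary_def numeral_2_eq_2
    by (intro exI[of _ "indicator {\<sigma>}"]) (auto simp: is_chain_def indicator_def)
  then have "cochain_eval K (\<lambda>e. h (indicator {e})) ?b = 0"
    using cochain_eval_linear_functional[OF h finite_simplices[OF K] is_chain_chain_boundary[OF K]]
      h_boundary by (simp add: numeral_2_eq_2)
  ultimately show "(\<Sum>e\<in>edges K. h (indicator {e}) * incidence \<sigma> e) = 0"
    by (simp add: cochain_eval_def)
qed

lemma cocycle_of_separating_functional:
  fixes K :: "'v::linorder set set" and h :: "('v set \<Rightarrow> real) \<Rightarrow> real"
  assumes K: "simplicial_complex K" and c: "is_chain K 1 c" and C: "C \<subseteq> edges K"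
    and h: "linear h" "\<forall>u\<in>relative_boundaries K C. h u = 0"
    and hc: "h c \<noteq> 0" and hC: "\<forall>e\<in>C. h (indicator {e}) \<noteq> 0"
  shows "\<exists>\<phi>. is_cocycle1 K \<phi> \<and> supp1 K \<phi> = C \<and> cochain_eval K \<phi> c = 1"
proof -
  define g where "g = (\<lambda>x. h x / h c)"
  have g: "linear g"
    using linear_compose_scale_right[OF h(1), of "1 / h c"] by (simp add: g_def)
  define \<phi> where "\<phi> = (\<lambda>e. g (indicator {e}))"
  have "\<forall>b. is_boundary K 1 b \<longrightarrow> g b = 0"
  proof (intro allI impI)
    fix b assume "is_boundary K 1 b"
    then have "h b = 0"
      using h(2) boundary_in_relative_boundaries by blast
    then show "g b = 0"
      by (simp add: g_def)
  qed
  then have "is_cocycle1 K \<phi>"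
    unfolding \<phi>_def by (fact is_cocycle1_linear_functional[OF K g])
  moreover have "supp1 K \<phi> = C"
  proof -
    have "h (indicator {e}) = 0" if "e \<in> edges K - C" for e
      using h(2) indicator_in_relative_boundaries[OF C that] by blast
    then show ?thesis
      using hc hC C by (auto simp: supp1_def \<phi>_def g_def)
  qed
  moreover have "cochain_eval K \<phi> c = g c"
    unfolding \<phi>_def by (rule cochain_eval_linear_functional[OF g finite_simplices[OF K] c])
  then have "cochain_eval K \<phi> c = 1"
    using hc by (simp add: g_def)
  ultimately show ?thesis
    by blast
qed

theorem mainTheorem12:
  fixes K :: "'v::linorder set set" and c :: "'v set \<Rightarrow> real" and C :: "'v set set"
  assumes "simplicial_complex K"
    and "is_cycle K 1 c"
    and "homological_edge_cut K c C"
    and "\<forall>e\<in>C. \<not> homological_edge_cut K c (C - {e})"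
  shows "\<exists>\<phi>. is_cocycle1 K \<phi> \<and> supp1 K \<phi> = C \<and> cochain_eval K \<phi> c = 1"
proof -
  have C: "C \<subseteq> edges K"
    using assms(3) by (simp add: homological_edge_cut_def)
  let ?X = "insert c ((\<lambda>e. indicator {e}) ` C)"
  have "finite C"
    using C finite_subset finite_simplices[OF assms(1)] by blast
  then have X_finite: "finite ?X"
    by simp
  have "c \<notin> relative_boundaries K C"
    using homological_edge_cut_iff[OF assms(1,2) C] assms(3) by blast
  moreover have "indicator {e} \<notin> relative_boundaries K C" if "e \<in> C" for e
    using indicator_notin_relative_boundaries[OF assms(1,2) C assms(3)] assms(4) that by blast
  ultimately have X_disjoint: "?X \<inter> relative_boundaries K C = {}"
    by blast
  obtain h :: "('v set \<Rightarrow> real) \<Rightarrow> real" where h: "linear h"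
    "\<forall>u\<in>relative_boundaries K C. h u = 0" "\<forall>x\<in>?X. h x \<noteq> 0"
    using linear_functional_avoiding[OF subspace_relative_boundaries X_finite X_disjoint] by blast
  moreover have "is_chain K 1 c"
    using assms(2) by (simp add: is_cycle_def)
  ultimately show ?thesis
    using cocycle_of_separating_functional[OF assms(1) _ C] by simp
qed

end
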